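(* Let $\Sigma_\infty$, $\succeq^*$ and $\{\succeq^k\}$ be as in the following setting: $\Sigma_\infty$ is the sequence of experiments whose existence is asserted in the preference-recovery theorem (so that any continuous weakly monotone preferences $\succeq^k$ strongly rationalizing $(\Sigma_k,c_{\succeq^*})$, for a continuous weakly monotone $\succeq^*$, satisfy $\succeq^k\to\succeq^*$ in closed convergence); $\succeq^*$ is a continuous weakly monotone preference on $X$; and each $\succeq^k$ is a continuous weakly monotone preference strongly rationalizing $(\Sigma_k,c_{\succeq^*})$. If in addition $\succeq^*$ and each $\succeq^k$ are standard, with standard representations $(V,u)$ and $(V^k,u^k)$ respectively, then $(V^k,u^k)\to(V,u)$ as $k\to\infty$ in the compact-open topology (i.e. uniformly on compact sets).
   Context: $S$ is a finite nonempty set, $a<b$ reals, $\Delta([a,b])$ the Borel probability measures on $[a,b]$ with the weak topology, $X=\Delta([a,b])^S$ with the product topology. First-order stochastic dominance $p\ge q$: $\int h\,dp\ge\int h\,dq$ for all bounded continuous nondecreasing $h$; for acts $f\ge g$ iff $f(s)\ge g(s)$ for all $s$. A preference is a complete, transitive relation closed in $X\times X$; weakly monotone if $f\ge g\Rightarrow f\succeq g$. Let $\mathcal U$ be the set of continuous nondecreasing $u:[a,b]\to\mathbf{R}$ with $u(a)=0,u(b)=1$. $(V,u)$ is a standard representation if $V:X\to\mathbf{R}$ is continuous, $u\in\mathcal U$, and $V(p,\dots,p)=\int u\,dp$ for all $p$; a preference is standard if weakly monotone and represented by $V$ for some standard representation $(V,u)$. A sequence of experiments is a sequence $\{B_i\}$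 of unordered pairs in $X$, $\Sigma_k=\{B_1,\dots,B_k\}$, $B=\bigcup_iB_i$ dense in $X$, every pair from $B$ appearing as some $B_k$. $c_\succeq(A)=\{x\in A:x\succeq y\ \forall y\in A\}$; $\succeq^k$ strongly rationalizes $(\Sigma_k,c)$ if $c(B_i)=c_{\succeq^k}(B_i)$ for all $B_i\in\Sigma_k$. Closed convergence of closed sets $F^n\to F$ in $X\times X$ means $\mathrm{Li}=F=\mathrm{Ls}$, where $\mathrm{Li}$ ($\mathrm{Ls}$) is the set of points every neighborhood of which meets $F^n$ for all large $n$ (infinitely many $n$). *)

theory Defs
  imports "HOL-Probability.Probability"
begin

type_synonym 's act = "'s \<Rightarrow> real measure"

definition Delta :: "real \<Rightarrow> real \<Rightarrow> real measure set" where
  "Delta a b = {p. prob_space p \<and> space p = {a..b} \<and> sets p = sets (restrict_space borel {a..b})}"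

definition Cab :: "real \<Rightarrow> real \<Rightarrow> (real \<Rightarrow> real) set" where
  "Cab a b = {h. continuous_on {a..b} h}"

definition weak_top :: "real \<Rightarrow> real \<Rightarrow> real measure topology" where
  "weak_top a b = pullback_topology (Delta a b)
      (\<lambda>p. restrict (\<lambda>h. integral\<^sup>L p h) (Cab a b))
      (product_topology (\<lambda>_. euclideanreal) (Cab a b))"

definition Xtop :: "real \<Rightarrow> real \<Rightarrow> ('s::finite) act topology" where
  "Xtop a b = product_topology (\<lambda>_. weak_top a b) UNIV"

abbreviation Xset :: "real \<Rightarrow> real \<Rightarrow> ('s::finite) act set" where
  "Xset a b \<equiv> topspace (Xtop a b)"

definition fosd :: "real \<Rightarrow> real \<Rightarrow> real measure \<Rightarrow> real measure \<Rightarrow> bool" where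
  "fosd a b p q \<longleftrightarrow> (\<forall>h::real\<Rightarrow>real. continuous_on {a..b} h \<and> mono_on {a..b} h \<longrightarrow>
      integral\<^sup>L p h \<ge> integral\<^sup>L q h)"

definition fosd_act :: "real \<Rightarrow> real \<Rightarrow> ('s::finite) act \<Rightarrow> 's act \<Rightarrow> bool" where
  "fosd_act a b f g \<longleftrightarrow> (\<forall>s. fosd a b (f s) (g s))"

definition preference :: "real \<Rightarrow> real \<Rightarrow> (('s::finite) act \<times> 's act) set \<Rightarrow> bool" where
  "preference a b R \<longleftrightarrow>
     R \<subseteq> Xset a b \<times> Xset a b \<and>
     (\<forall>f\<in>Xset a b. \<forall>g\<in>Xset a b. (f,g) \<in> R \<or> (g,f) \<in> R) \<and>
     (\<forall>f g h. (f,g) \<in> R \<and> (g,h) \<in> R \<longrightarrow> (f,h) \<in> R) \<and>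
     closedin (prod_topology (Xtop a b) (Xtop a b)) R"

definition weakly_monotone :: "real \<Rightarrow> real \<Rightarrow> (('s::finite) act \<times> 's act) set \<Rightarrow> bool" where
  "weakly_monotone a b R \<longleftrightarrow>
     (\<forall>f\<in>Xset a b. \<forall>g\<in>Xset a b. fosd_act a b f g \<longrightarrow> (f,g) \<in> R)"

definition Uset :: "real \<Rightarrow> real \<Rightarrow> (real \<Rightarrow> real) set" where
  "Uset a b = {u. continuous_on {a..b} u \<and> mono_on {a..b} u \<and> u a = 0 \<and> u b = 1}"

definition standard_rep :: "real \<Rightarrow> real \<Rightarrow> (('s::finite) act \<Rightarrow> real) \<Rightarrow> (real \<Rightarrow> real) \<Rightarrow> bool" where
  "standard_rep a b V u \<longleftrightarrow>
     continuous_map (Xtop a b) euclideanreal V \<and> u \<in> Uset a b \<and>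
     (\<forall>p\<in>Delta a b. V (\<lambda>_. p) = integral\<^sup>L p u)"

definition represents :: "real \<Rightarrow> real \<Rightarrow> (('s::finite) act \<times> 's act) set \<Rightarrow> ('s act \<Rightarrow> real) \<Rightarrow> bool" where
  "represents a b R V \<longleftrightarrow> (\<forall>f\<in>Xset a b. \<forall>g\<in>Xset a b. (f,g) \<in> R \<longleftrightarrow> V f \<ge> V g)"

text \<open>Sequence of experiments (indexed from 0; \<Sigma>_k = {B i | i < k}).\<close>
definition seq_experiments :: "real \<Rightarrow> real \<Rightarrow> (nat \<Rightarrow> ('s::finite) act set) \<Rightarrow> bool" where
  "seq_experiments a b B \<longleftrightarrow>
     (\<forall>i. \<exists>x\<in>Xset a b. \<exists>y\<in>Xset a b. x \<noteq> y \<and> B i = {x, y}) \<and>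
     (Xtop a b) closure_of (\<Union>(range B)) = Xset a b \<and>
     (\<forall>x\<in>\<Union>(range B). \<forall>y\<in>\<Union>(range B). x \<noteq> y \<longrightarrow> (\<exists>k. B k = {x, y}))"

definition choice :: "('a \<times> 'a) set \<Rightarrow> 'a set \<Rightarrow> 'a set" where
  "choice R A = {x\<in>A. \<forall>y\<in>A. (x,y) \<in> R}"

definition strongly_rationalizes ::
  "('a \<times> 'a) set \<Rightarrow> (nat \<Rightarrow> 'a set) \<Rightarrow> nat \<Rightarrow> ('a set \<Rightarrow> 'a set) \<Rightarrow> bool" where
  "strongly_rationalizes R B k c \<longleftrightarrow> (\<forall>i<k. c (B i) = choice R (B i))"

definition Li :: "'a topology \<Rightarrow> (nat \<Rightarrow> 'a set) \<Rightarrow> 'a set" where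
  "Li T F = {x\<in>topspace T. \<forall>U. openin T U \<and> x \<in> U \<longrightarrow> (\<forall>\<^sub>F n in sequentially. F n \<inter> U \<noteq> {})}"

definition Ls :: "'a topology \<Rightarrow> (nat \<Rightarrow> 'a set) \<Rightarrow> 'a set" where
  "Ls T F = {x\<in>topspace T. \<forall>U. openin T U \<and> x \<in> U \<longrightarrow> (\<exists>\<^sub>F n in sequentially. F n \<inter> U \<noteq> {})}"

definition closed_conv :: "'a topology \<Rightarrow> (nat \<Rightarrow> 'a set) \<Rightarrow> 'a set \<Rightarrow> bool" where
  "closed_conv T F G \<longleftrightarrow> Li T F = G \<and> Ls T F = G"

definition recovers :: "real \<Rightarrow> real \<Rightarrow> (nat \<Rightarrow> ('s::finite) act set) \<Rightarrow> bool" where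
  "recovers a b B \<longleftrightarrow>
     (\<forall>R Rk. preference a b R \<and> weakly_monotone a b R \<and>
        (\<forall>k. preference a b (Rk k) \<and> weakly_monotone a b (Rk k) \<and>
             strongly_rationalizes (Rk k) B k (choice R))
        \<longrightarrow> closed_conv (prod_topology (Xtop a b) (Xtop a b)) Rk R)"

end

theory Submission
  imports Defs
begin

text \<open>
  Weak monotonicity and the normalisation \<open>u(a) = 0\<close>, \<open>u(b) = 1\<close> force every utility \<open>V\<close>,
  \<open>V\<^sup>k\<close> to take values in \<open>[0,1]\<close> and to assign the value \<open>\<beta>\<close> to the constant act \<open>m \<beta>\<close>
  paying \<open>b\<close> with probability \<open>\<beta>\<close> and \<open>a\<close> otherwise. These acts are a common yardstick:
  if \<open>V f < \<beta>\<close>, then \<open>(f, m \<beta>) \<notin> \<succeq>\<^sup>*\<close>, so by closed convergence a whole neighbourhood of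
  \<open>(f, m \<beta>)\<close> eventually avoids \<open>\<succeq>\<^sup>k\<close>, i.e. \<open>V\<^sup>k < \<beta>\<close> near \<open>f\<close> for all large \<open>k\<close>;
  symmetrically from below. Together with continuity of \<open>V\<close> this gives locally uniform
  convergence, hence uniform convergence on compact sets. Finally \<open>u\<^sup>k(x) = V\<^sup>k(\<delta>\<^sub>x)\<close>, and
  \<open>x \<mapsto> \<delta>\<^sub>x\<close> maps \<open>[a,b]\<close> continuously onto a compact set of acts.
\<close>

lemma compactin_uniform_limitI:
  fixes f :: "'i \<Rightarrow> 'a \<Rightarrow> 'b::metric_space"
  assumes K: "compactin T K"
    and local: "\<And>x e. x \<in> topspace T \<Longrightarrow> e > 0 \<Longrightarrow>
      \<exists>N. openin T N \<and> x \<in> N \<and> (\<forall>\<^sub>F n in F. \<forall>y\<in>N. dist (f n y) (g y) < e)"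
  shows "uniform_limit K f g F"
proof (rule uniform_limitI)
  fix e :: real assume "e > 0"
  let ?\<U> = "{N. openin T N \<and> (\<forall>\<^sub>F n in F. \<forall>y\<in>N. dist (f n y) (g y) < e)}"
  have "K \<subseteq> \<Union>?\<U>"
    using local[OF _ \<open>e > 0\<close>] compactin_subset_topspace[OF K] by blast
  then obtain \<V> where \<V>: "finite \<V>" "\<V> \<subseteq> ?\<U>" "K \<subseteq> \<Union>\<V>"
    using K unfolding compactin_def by (metis (no_types, lifting) mem_Collect_eq)
  have "\<forall>\<^sub>F n in F. \<forall>N\<in>\<V>. \<forall>y\<in>N. dist (f n y) (g y) < e"
    using \<V>(1,2) by (intro eventually_ball_finite) auto
  then show "\<forall>\<^sub>F n in F. \<forall>y\<in>K. dist (f n y) (g y) < e"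
    by eventually_elim (use \<V>(3) in blast)
qed

lemma notin_Ls_prod_topologyE:
  assumes "x \<in> topspace S" "y \<in> topspace T" "(x, y) \<notin> Ls (prod_topology S T) F"
  obtains U W where "openin S U" "openin T W" "x \<in> U" "y \<in> W"
    "\<forall>\<^sub>F n in sequentially. F n \<inter> U \<times> W = {}"
proof -
  obtain Q where Q: "openin (prod_topology S T) Q" "(x, y) \<in> Q"
      "\<forall>\<^sub>F n in sequentially. F n \<inter> Q = {}"
    using assms unfolding Ls_def by (auto simp: not_frequently)
  obtain U W where UW: "openin S U" "openin T W" "x \<in> U" "y \<in> W" "U \<times> W \<subseteq> Q"
    using Q(1,2) by (metis openin_prod_topology_alt)
  have "\<forall>\<^sub>F n in sequentially. F n \<inter> U \<times> W = {}"
    using Q(3) by eventually_elim (use UW(5) in blast)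
  with UW(1-4) show thesis
    by (rule that)
qed

locale calibrated_representations =
  fixes T :: "'x topology" and R :: "('x \<times> 'x) set" and Rk :: "nat \<Rightarrow> ('x \<times> 'x) set"
    and V :: "'x \<Rightarrow> real" and Vk :: "nat \<Rightarrow> 'x \<Rightarrow> real" and m :: "real \<Rightarrow> 'x"
  assumes Ls_subset: "Ls (prod_topology T T) Rk \<subseteq> R"
    and continuous_V: "continuous_map T euclideanreal V"
    and represents_R: "\<And>f g. f \<in> topspace T \<Longrightarrow> g \<in> topspace T \<Longrightarrow> (f, g) \<in> R \<longleftrightarrow> V g \<le> V f"
    and represents_Rk:
      "\<And>k f g. f \<in> topspace T \<Longrightarrow> g \<in> topspace T \<Longrightarrow> (f, g) \<in> Rk k \<longleftrightarrow> Vk k g \<le> Vk k f"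
    and calibration:
      "\<And>k \<beta>. 0 \<le> \<beta> \<Longrightarrow> \<beta> \<le> 1 \<Longrightarrow> m \<beta> \<in> topspace T \<and> V (m \<beta>) = \<beta> \<and> Vk k (m \<beta>) = \<beta>"
    and range_V: "\<And>f. f \<in> topspace T \<Longrightarrow> V f \<in> {0..1}"
    and range_Vk: "\<And>k f. f \<in> topspace T \<Longrightarrow> Vk k f \<in> {0..1}"
begin

lemma eventually_less_near:
  assumes f: "f \<in> topspace T" and less: "V f < \<beta>"
  shows "\<exists>N. openin T N \<and> f \<in> N \<and> (\<forall>\<^sub>F n in sequentially. \<forall>g\<in>N. Vk n g < \<beta>)"
proof (cases "\<beta> \<le> 1")
  case True
  have \<beta>: "m \<beta> \<in> topspace T" "V (m \<beta>) = \<beta>" "\<And>k. Vk k (m \<beta>) = \<beta>"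
    using calibration[of \<beta>] range_V[OF f] less True by auto
  have "(f, m \<beta>) \<notin> Ls (prod_topology T T) Rk"
    using Ls_subset represents_R[OF f \<beta>(1)] \<beta>(2) less by auto
  then obtain U W where UW: "openin T U" "f \<in> U" "m \<beta> \<in> W"
      "\<forall>\<^sub>F n in sequentially. Rk n \<inter> U \<times> W = {}"
    using notin_Ls_prod_topologyE[OF f \<beta>(1)] by metis
  have below: "Vk n g < \<beta>" if "Rk n \<inter> U \<times> W = {}" "g \<in> U" for n g
  proof -
    have "(g, m \<beta>) \<notin> Rk n"
      using that UW(3) by blast
    then show ?thesis
      using represents_Rk[of g "m \<beta>" n] \<beta> openin_subset[OF UW(1)] \<open>g \<in> U\<close> by auto
  qed
  have "\<forall>\<^sub>F n in sequentially. \<forall>g\<in>U. Vk n g < \<beta>"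
    using UW(4) by eventually_elim (use below in blast)
  with UW(1,2) show ?thesis by blast
next
  case False
  then have "Vk n g < \<beta>" if "g \<in> topspace T" for n g
    using range_Vk[OF that, of n] by auto
  with f show ?thesis
    by (intro exI[of _ "topspace T"]) auto
qed

lemma eventually_greater_near:
  assumes f: "f \<in> topspace T" and greater: "\<beta> < V f"
  shows "\<exists>N. openin T N \<and> f \<in> N \<and> (\<forall>\<^sub>F n in sequentially. \<forall>g\<in>N. \<beta> < Vk n g)"
proof (cases "0 \<le> \<beta>")
  case True
  have \<beta>: "m \<beta> \<in> topspace T" "V (m \<beta>) = \<beta>" "\<And>k. Vk k (m \<beta>) = \<beta>"
    using calibration[of \<beta>] range_V[OF f] greater True by auto
  have "(m \<beta>, f) \<notin> Ls (prod_topology T T) Rk"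
    using Ls_subset represents_R[OF \<beta>(1) f] \<beta>(2) greater by auto
  then obtain U W where UW: "openin T W" "m \<beta> \<in> U" "f \<in> W"
      "\<forall>\<^sub>F n in sequentially. Rk n \<inter> U \<times> W = {}"
    using notin_Ls_prod_topologyE[OF \<beta>(1) f] by metis
  have above: "\<beta> < Vk n g" if "Rk n \<inter> U \<times> W = {}" "g \<in> W" for n g
  proof -
    have "(m \<beta>, g) \<notin> Rk n"
      using that UW(2) by blast
    then show ?thesis
      using represents_Rk[of "m \<beta>" g n] \<beta> openin_subset[OF UW(1)] \<open>g \<in> W\<close> by auto
  qed
  have "\<forall>\<^sub>F n in sequentially. \<forall>g\<in>W. \<beta> < Vk n g"
    using UW(4) by eventually_elim (use above in blast)
  with UW(1,3) show ?thesis by blast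
next
  case False
  then have "\<beta> < Vk n g" if "g \<in> topspace T" for n g
    using range_Vk[OF that, of n] by auto
  with f show ?thesis
    by (intro exI[of _ "topspace T"]) auto
qed

lemma locally_uniform_convergence:
  assumes f: "f \<in> topspace T" and e: "e > 0"
  shows "\<exists>N. openin T N \<and> f \<in> N \<and> (\<forall>\<^sub>F n in sequentially. \<forall>g\<in>N. dist (Vk n g) (V g) < e)"
proof -
  obtain N1 where N1: "openin T N1" "f \<in> N1"
      "\<forall>\<^sub>F n in sequentially. \<forall>g\<in>N1. Vk n g < V f + e/2"
    using eventually_less_near[OF f, of "V f + e/2"] e by auto
  obtain N2 where N2: "openin T N2" "f \<in> N2"
      "\<forall>\<^sub>F n in sequentially. \<forall>g\<in>N2. V f - e/2 < Vk n g"
    using eventually_greater_near[OF f, of "V f - e/2"] e by auto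
  define W where "W = {g \<in> topspace T. V g \<in> ball (V f) (e/2)}"
  have W: "openin T W" "f \<in> W"
    unfolding W_def using f e
    by (auto intro: openin_continuous_map_preimage[OF continuous_V] simp del: mem_ball
        simp flip: open_openin)
  have close: "dist (Vk n g) (V g) < e"
    if "Vk n g < V f + e/2" "V f - e/2 < Vk n g" "g \<in> W" for n g
    using that unfolding W_def mem_Collect_eq mem_ball dist_real_def by arith
  have "\<forall>\<^sub>F n in sequentially. \<forall>g\<in>N1 \<inter> N2 \<inter> W. dist (Vk n g) (V g) < e"
    using N1(3) N2(3) by eventually_elim (use close in blast)
  with N1(1,2) N2(1,2) W show ?thesis
    by (intro exI[of _ "N1 \<inter> N2 \<inter> W"]) auto
qed

lemma uniform_limit_on_compactin:
  assumes "compactin T K"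
  shows "uniform_limit K Vk V sequentially"
  using assms locally_uniform_convergence by (rule compactin_uniform_limitI)

end

lemma topspace_Xtop: "Xset a b = {f. \<forall>s. f s \<in> Delta a b}"
  by (auto simp: Xtop_def weak_top_def topspace_pullback_topology PiE_def Pi_def)

lemma Delta_measurable:
  assumes "p \<in> Delta a b" and "continuous_on {a..b} h"
  shows "h \<in> borel_measurable p"
  using assms borel_measurable_continuous_on_restrict measurable_cong_sets
  unfolding Delta_def by blast

lemma Delta_integral_mono_bounds:
  fixes h :: "real \<Rightarrow> real"
  assumes p: "p \<in> Delta a b" and h: "continuous_on {a..b} h" "mono_on {a..b} h" and "a \<le> b"
  shows "h a \<le> integral\<^sup>L p h" "integral\<^sup>L p h \<le> h b"
proof -
  interpret prob_space p
    using p by (simp add: Delta_def)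
  have range: "h a \<le> h x \<and> h x \<le> h b" if "x \<in> space p" for x
    using that p h(2) \<open>a \<le> b\<close> by (auto simp: Delta_def intro: mono_onD)
  have "norm (h x) \<le> \<bar>h a\<bar> + \<bar>h b\<bar>" if "x \<in> space p" for x
    using range[OF that] by auto
  then have "integrable p h"
    using Delta_measurable[OF p h(1)] by (intro integrable_const_bound AE_I2)
  with range show "h a \<le> integral\<^sup>L p h" "integral\<^sup>L p h \<le> h b"
    by (auto intro!: integral_ge_const integral_le_const AE_I2)
qed

definition binary_lottery :: "real \<Rightarrow> real \<Rightarrow> real \<Rightarrow> real measure" where
  "binary_lottery a b \<beta> =
     distr (measure_pmf (bernoulli_pmf \<beta>)) (restrict_space borel {a..b}) (\<lambda>t. if t then b else a)"

lemma binary_lottery_outcome_measurable: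
  "(a::real) \<le> b \<Longrightarrow>
    (\<lambda>t. if t then b else a) \<in> measurable (measure_pmf (bernoulli_pmf \<beta>)) (restrict_space borel {a..b})"
  by (auto simp: space_restrict_space)

lemma binary_lottery_in_Delta: "a \<le> b \<Longrightarrow> binary_lottery a b \<beta> \<in> Delta a b"
  using prob_space.prob_space_distr[OF prob_space_measure_pmf binary_lottery_outcome_measurable]
  by (auto simp: Delta_def binary_lottery_def space_restrict_space)

lemma integral_binary_lottery:
  fixes h :: "real \<Rightarrow> real"
  assumes ab: "a \<le> b" and h: "continuous_on {a..b} h" and "0 \<le> \<beta>" "\<beta> \<le> 1"
  shows "integral\<^sup>L (binary_lottery a b \<beta>) h = \<beta> * h b + (1 - \<beta>) * h a"
proof -
  have "integral\<^sup>L (binary_lottery a b \<beta>) h =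
      (\<integral>t. h (if t then b else a) \<partial>measure_pmf (bernoulli_pmf \<beta>))"
    unfolding binary_lottery_def
    by (rule integral_distr[OF binary_lottery_outcome_measurable[OF ab]
          borel_measurable_continuous_on_restrict[OF h]])
  also have "\<dots> = (\<Sum>t\<in>UNIV. h (if t then b else a) * pmf (bernoulli_pmf \<beta>) t)"
    by (rule integral_measure_pmf_real) auto
  also have "\<dots> = \<beta> * h b + (1 - \<beta>) * h a"
    using \<open>0 \<le> \<beta>\<close> \<open>\<beta> \<le> 1\<close> by (simp add: UNIV_bool)
  finally show ?thesis .
qed

lemma fosd_binary_lottery_one:
  assumes "a \<le> b" "p \<in> Delta a b"
  shows "fosd a b (binary_lottery a b 1) p"
  using assms integral_binary_lottery[of a b _ 1] Delta_integral_mono_bounds(2)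
  by (auto simp: fosd_def)

lemma fosd_binary_lottery_zero:
  assumes "a \<le> b" "p \<in> Delta a b"
  shows "fosd a b p (binary_lottery a b 0)"
  using assms integral_binary_lottery[of a b _ 0] Delta_integral_mono_bounds(1)
  by (auto simp: fosd_def)

definition point_mass :: "real \<Rightarrow> real \<Rightarrow> real \<Rightarrow> real measure" where
  "point_mass a b x = return (restrict_space borel {a..b}) x"

lemma point_mass_in_Delta: "x \<in> {a..b} \<Longrightarrow> point_mass a b x \<in> Delta a b"
  by (auto simp: Delta_def point_mass_def space_restrict_space intro!: prob_space_return)

lemma integral_point_mass:
  fixes h :: "real \<Rightarrow> real"
  assumes "x \<in> {a..b}" "continuous_on {a..b} h"
  shows "integral\<^sup>L (point_mass a b x) h = h x"
  unfolding point_mass_def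
  using assms borel_measurable_continuous_on_restrict[OF assms(2)]
  by (intro integral_return) (auto simp: space_restrict_space)

lemma continuous_map_point_mass_act:
  "continuous_map (top_of_set {a..b}) (Xtop a b) (\<lambda>x (_::'s::finite). point_mass a b x)"
  unfolding Xtop_def continuous_map_componentwise_UNIV weak_top_def
proof (intro allI continuous_map_pullback')
  show "topspace (top_of_set {a..b}) \<subseteq> point_mass a b -` Delta a b"
    using point_mass_in_Delta by auto
  have "continuous_map (top_of_set {a..b}) euclideanreal (\<lambda>x. integral\<^sup>L (point_mass a b x) h)"
    if "h \<in> Cab a b" for h
  proof (rule continuous_map_eq)
    show "continuous_map (top_of_set {a..b}) euclideanreal h"
      using that by (simp add: Cab_def)
  qed (use that integral_point_mass in \<open>auto simp: Cab_def\<close>)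
  then show "continuous_map (top_of_set {a..b}) (product_topology (\<lambda>_. euclideanreal) (Cab a b))
      ((\<lambda>p. restrict (\<lambda>h. integral\<^sup>L p h) (Cab a b)) \<circ> point_mass a b)"
    by (auto simp: continuous_map_componentwise)
qed

lemma standard_rep_binary_lottery:
  assumes "standard_rep a b V u" "a \<le> b" "0 \<le> \<beta>" "\<beta> \<le> 1"
  shows "V (\<lambda>_. binary_lottery a b \<beta>) = \<beta>"
  using assms binary_lottery_in_Delta integral_binary_lottery
  by (simp add: standard_rep_def Uset_def)

lemma standard_rep_point_mass:
  assumes "standard_rep a b V u" "x \<in> {a..b}"
  shows "V (\<lambda>_. point_mass a b x) = u x"
  using assms point_mass_in_Delta integral_point_mass
  by (simp add: standard_rep_def Uset_def)

lemma standard_rep_range: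
  fixes R :: "(('s::finite) act \<times> 's act) set"
  assumes ab: "a \<le> b" and "weakly_monotone a b R" "represents a b R V" "standard_rep a b V u"
    and f: "f \<in> Xset a b"
  shows "V f \<in> {0..1}"
proof -
  have top: "(\<lambda>_. binary_lottery a b \<beta>) \<in> Xset a b" for \<beta>
    using binary_lottery_in_Delta[OF ab] by (simp add: topspace_Xtop)
  have "fosd_act a b (\<lambda>_. binary_lottery a b 1) f" "fosd_act a b f (\<lambda>_. binary_lottery a b 0)"
    using f fosd_binary_lottery_one[OF ab] fosd_binary_lottery_zero[OF ab]
    by (auto simp: fosd_act_def topspace_Xtop)
  then have "((\<lambda>_. binary_lottery a b 1), f) \<in> R" "(f, (\<lambda>_. binary_lottery a b 0)) \<in> R"
    using assms(2) top f unfolding weakly_monotone_def by blast+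
  then have "V f \<le> V (\<lambda>_. binary_lottery a b 1)" "V (\<lambda>_. binary_lottery a b 0) \<le> V f"
    using assms(3) top f unfolding represents_def by blast+
  then show ?thesis
    using standard_rep_binary_lottery[OF assms(4) ab] by simp
qed

lemma calibrated_representations_standard:
  fixes R :: "(('s::finite) act \<times> 's act) set"
  assumes ab: "a \<le> b" and Ls: "Ls (prod_topology (Xtop a b) (Xtop a b)) Rk \<subseteq> R"
    and R: "weakly_monotone a b R" "represents a b R V" "standard_rep a b V u"
    and Rk: "\<And>k. weakly_monotone a b (Rk k)" "\<And>k. represents a b (Rk k) (Vk k)"
      "\<And>k. standard_rep a b (Vk k) (uk k)"
  shows "calibrated_representations (Xtop a b) R Rk V Vk (\<lambda>\<beta> _. binary_lottery a b \<beta>)"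
proof
  show "continuous_map (Xtop a b) euclideanreal V"
    using R(3) by (simp add: standard_rep_def)
  show "0 \<le> \<beta> \<Longrightarrow> \<beta> \<le> 1 \<Longrightarrow> (\<lambda>_. binary_lottery a b \<beta>) \<in> Xset a b \<and>
      V (\<lambda>_. binary_lottery a b \<beta>) = \<beta> \<and> Vk k (\<lambda>_. binary_lottery a b \<beta>) = \<beta>" for k \<beta>
    using binary_lottery_in_Delta[OF ab] standard_rep_binary_lottery[OF R(3) ab]
      standard_rep_binary_lottery[OF Rk(3) ab] by (simp add: topspace_Xtop)
  show "f \<in> Xset a b \<Longrightarrow> V f \<in> {0..1}" for f
    using standard_rep_range[OF ab R] .
  show "f \<in> Xset a b \<Longrightarrow> Vk k f \<in> {0..1}" for k f
    using standard_rep_range[OF ab Rk] .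
qed (use Ls R(2) Rk(2) in \<open>auto simp: represents_def\<close>)

theorem mainTheorem8:
  fixes a b :: real
    and B :: "nat \<Rightarrow> ('s::finite) act set"
    and R :: "('s act \<times> 's act) set"
    and Rk :: "nat \<Rightarrow> ('s act \<times> 's act) set"
    and V :: "'s act \<Rightarrow> real" and u :: "real \<Rightarrow> real"
    and Vk :: "nat \<Rightarrow> 's act \<Rightarrow> real" and uk :: "nat \<Rightarrow> real \<Rightarrow> real"
  assumes "a < b"
    and "seq_experiments a b B"
    and "recovers a b B"
    and "preference a b R" and "weakly_monotone a b R"
    and "\<And>k. preference a b (Rk k)" and "\<And>k. weakly_monotone a b (Rk k)"
    and "\<And>k. strongly_rationalizes (Rk k) B k (choice R)"
    and "standard_rep a b V u" and "represents a b R V"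
    and "\<And>k. standard_rep a b (Vk k) (uk k)" and "\<And>k. represents a b (Rk k) (Vk k)"
  shows "(\<forall>K. compactin (Xtop a b) K \<longrightarrow> uniform_limit K Vk V sequentially)
         \<and> uniform_limit {a..b} uk u sequentially"
proof -
  have "Ls (prod_topology (Xtop a b) (Xtop a b)) Rk = R"
    using assms(3-8) by (simp add: recovers_def closed_conv_def)
  then interpret calibrated_representations "Xtop a b" R Rk V Vk "\<lambda>\<beta> _. binary_lottery a b \<beta>"
    using assms(1,5,7,9-12) by (intro calibrated_representations_standard) auto
  let ?\<delta> = "\<lambda>x (_::'s). point_mass a b x"
  have "compactin (Xtop a b) (?\<delta> ` {a..b})"
    by (rule image_compactin[OF _ continuous_map_point_mass_act]) (simp add: compactin_subtopology)
  then have "uniform_limit {a..b} (\<lambda>n x. Vk n (?\<delta> x)) (\<lambda>x. V (?\<delta> x)) sequentially"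
    by (intro uniform_limit_compose'[OF uniform_limit_on_compactin]) auto
  moreover have "uniform_limit {a..b} (\<lambda>n x. Vk n (?\<delta> x)) (\<lambda>x. V (?\<delta> x)) sequentially \<longleftrightarrow>
      uniform_limit {a..b} uk u sequentially"
    using assms(9,11) by (intro uniform_limit_cong') (simp_all add: standard_rep_point_mass)
  ultimately show ?thesis
    by (simp add: uniform_limit_on_compactin)
qed

end
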